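(* Let $U\subseteq\mathcal{B}$ be a maximal avoidable set containing an element $(a,0)$ with $a\ge 1$. Then there is an odd integer $d<a$ such that $U=\{(a,0),(0,0)\}\cup\{(c,d)\in\mathcal{B}\mid \max\{c,c+d\}<a\}$.
   Context: The bicyclic inverse semigroup is $\mathcal{B}=\{(a,b)\in\mathbb{Z}\times\mathbb{Z}\mid a\ge 0,\ a+b\ge 0\}$ with multiplication $(a,b)(c,d)=(\max\{c+d,a\}-d,\ b+d)$. A subset $U\subseteq\mathcal{B}$ is called avoidable if $\mathcal{B}$ can be partitioned into two subsets $A$ and $B$ such that no element of $U$ can be written as a product $xy$ of two distinct elements $x\neq y$ both in $A$, or both in $B$. A maximal avoidable set is an avoidable set not properly contained in any other avoidable subset of $\mathcal{B}$. *)

theory Defs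
  imports Main
begin

definition bicyclic :: "(int \<times> int) set" where
  "bicyclic = {(a, b). a \<ge> 0 \<and> a + b \<ge> 0}"

fun bmult :: "int \<times> int \<Rightarrow> int \<times> int \<Rightarrow> int \<times> int" where
  "bmult (a, b) (c, d) = (max (c + d) a - d, b + d)"

definition avoidable :: "(int \<times> int) set \<Rightarrow> bool" where
  "avoidable U \<longleftrightarrow> U \<subseteq> bicyclic \<and>
     (\<exists>A B. A \<union> B = bicyclic \<and> A \<inter> B = {} \<and>
        (\<forall>x\<in>A. \<forall>y\<in>A. x \<noteq> y \<longrightarrow> bmult x y \<notin> U) \<and>
        (\<forall>x\<in>B. \<forall>y\<in>B. x \<noteq> y \<longrightarrow> bmult x y \<notin> U))"

definition maximal_avoidable :: "(int \<times> int) set \<Rightarrow> bool" where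
  "maximal_avoidable U \<longleftrightarrow> avoidable U \<and>
     (\<forall>V. avoidable V \<and> U \<subseteq> V \<longrightarrow> V = U)"

end

theory Submission
  imports Defs
begin

text \<open>Avoidability of U means a 2-colouring of the bicyclic semigroup in which x and y get
  different colours whenever x \<noteq> y and xy \<in> U. If (a,0) \<in> U, then every element (s,t)
  lying below level a has a partner z with zs = (a,0) or sz = (a,0) that depends only on t,
  so such elements are coloured by a function h of t alone, with h t \<noteq> h (-t). Every further
  (c,d) \<in> U then lies below level a and forces h t \<noteq> h (d - t); the two reflections
  t \<mapsto> -t and t \<mapsto> d - t can only both flip a colouring of \<int> if d is odd, and two
  different odd values of d would give an odd cycle. Conversely, for odd d < a the set
  described is avoidable, and maximality forces equality.\<close>

definition separates :: "(int \<times> int) set \<Rightarrow> (int \<times> int \<Rightarrow> bool) \<Rightarrow> bool" where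
  "separates U f \<longleftrightarrow>
     (\<forall>x\<in>bicyclic. \<forall>y\<in>bicyclic. x \<noteq> y \<longrightarrow> bmult x y \<in> U \<longrightarrow> f x \<noteq> f y)"

lemma avoidable_iff_separates:
  "avoidable U \<longleftrightarrow> U \<subseteq> bicyclic \<and> (\<exists>f. separates U f)"
proof
  assume "avoidable U"
  then obtain A B where "U \<subseteq> bicyclic" "A \<union> B = bicyclic" "A \<inter> B = {}"
    "\<forall>x\<in>A. \<forall>y\<in>A. x \<noteq> y \<longrightarrow> bmult x y \<notin> U"
    "\<forall>x\<in>B. \<forall>y\<in>B. x \<noteq> y \<longrightarrow> bmult x y \<notin> U"
    unfolding avoidable_def by blast
  then have "separates U (\<lambda>x. x \<in> A)"
    unfolding separates_def by blast
  with \<open>U \<subseteq> bicyclic\<close> show "U \<subseteq> bicyclic \<and> (\<exists>f. separates U f)" by blast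
next
  assume "U \<subseteq> bicyclic \<and> (\<exists>f. separates U f)"
  then obtain f where "U \<subseteq> bicyclic" "separates U f" by blast
  then show "avoidable U"
    unfolding avoidable_def separates_def
    by (intro conjI exI[of _ "{x \<in> bicyclic. f x}"] exI[of _ "{x \<in> bicyclic. \<not> f x}"]) auto
qed

definition strip :: "int \<Rightarrow> int \<Rightarrow> (int \<times> int) set" where
  "strip a d = {(a, 0), (0, 0)} \<union> {(c, e). (c, e) \<in> bicyclic \<and> max c (c + e) < a \<and> e = d}"

text \<open>A colouring of \<int> flipped by both t \<mapsto> -t (for t \<noteq> 0) and t \<mapsto> d - t: on multiples
  of d it is the sign of the quotient, elsewhere the parity of the residue, which d - r
  reverses because d is odd.\<close>

definition reflection_colour :: "int \<Rightarrow> int \<Rightarrow> bool" where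
  "reflection_colour d t = (if d dvd t then t div d > 0 else odd (t mod d))"

lemma reflection_colour_0: "\<not> reflection_colour d 0"
  by (simp add: reflection_colour_def)

lemma reflection_colour_uminus:
  assumes "odd d" "t \<noteq> 0"
  shows "reflection_colour d (- t) \<noteq> reflection_colour d t"
proof (cases "d dvd t")
  case True
  then obtain k where k: "t = d * k" by blast
  with assms have "d \<noteq> 0" "k \<noteq> 0" by auto
  then have "t div d = k" "(- t) div d = - k"
    using k by (simp, metis minus_mult_right nonzero_mult_div_cancel_left)
  with True \<open>k \<noteq> 0\<close> show ?thesis by (auto simp: reflection_colour_def)
next
  case False
  then have "(- t) mod d = d - t mod d"
    by (simp add: zmod_zminus1_eq_if dvd_eq_mod_eq_0)
  with False assms(1) show ?thesis by (auto simp: reflection_colour_def)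
qed

lemma reflection_colour_reflect:
  assumes "odd d"
  shows "reflection_colour d (d - t) \<noteq> reflection_colour d t"
proof (cases "d dvd t")
  case True
  then obtain k where k: "t = d * k" by blast
  with assms have "d \<noteq> 0" by auto
  have "d - t = d * (1 - k)" using k by (simp add: algebra_simps)
  then have "reflection_colour d (d - t) \<longleftrightarrow> 1 - k > 0"
    using \<open>d \<noteq> 0\<close> by (simp add: reflection_colour_def)
  moreover have "reflection_colour d t \<longleftrightarrow> k > 0"
    using k \<open>d \<noteq> 0\<close> by (simp add: reflection_colour_def)
  ultimately show ?thesis by auto
next
  case False
  then have "\<not> d dvd (d - t)" using dvd_diff[of d d "d - t"] by auto
  moreover have "(d - t) mod d = (- t) mod d"
    by (metis diff_conv_add_uminus add.commute mod_add_self2)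
  moreover have "(- t) mod d = d - t mod d"
    using False by (simp add: zmod_zminus1_eq_if dvd_eq_mod_eq_0)
  ultimately have "reflection_colour d (d - t) \<longleftrightarrow> odd (d - t mod d)"
    by (simp add: reflection_colour_def)
  moreover have "reflection_colour d t \<longleftrightarrow> odd (t mod d)"
    using False by (simp add: reflection_colour_def)
  ultimately show ?thesis using assms by simp
qed

lemma strip_avoidable:
  assumes d: "odd d" and a: "a \<ge> 1"
  shows "avoidable (strip a d)"
proof -
  define f where "f = (\<lambda>(s::int, t::int). if t = 0 then s = a else reflection_colour d t)"
  have "f (s, t) \<noteq> f (u, v)"
    if st: "(s, t) \<in> bicyclic" and uv: "(u, v) \<in> bicyclic" and ne: "(s, t) \<noteq> (u, v)"
      and prod: "bmult (s, t) (u, v) \<in> strip a d" for s t u v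
  proof -
    have "s \<ge> 0" "s + t \<ge> 0" "u \<ge> 0" "u + v \<ge> 0"
      using st uv by (auto simp: bicyclic_def)
    have "(max (u + v) s - v, t + v) \<in> strip a d" using prod by simp
    then consider (idem) "(max (u + v) s - v, t + v) \<in> {(a, 0), (0, 0)}"
      | (strip) "max (max (u + v) s - v) (max (u + v) s - v + (t + v)) < a" "t + v = d"
      unfolding strip_def by blast
    then show ?thesis
    proof cases
      case idem
      then have v: "v = - t" and fst_prod: "max (u + v) s - v \<in> {a, 0}" by auto
      show ?thesis
      proof (cases "t = 0")
        case True
        with v fst_prod ne \<open>s \<ge> 0\<close> \<open>u \<ge> 0\<close> show ?thesis
          by (auto simp: f_def max_def split: if_splits)
      next
        case False
        with v reflection_colour_uminus[OF d False] show ?thesis by (simp add: f_def)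
      qed
    next
      case strip
      then have "t = 0 \<Longrightarrow> s < a" "v = 0 \<Longrightarrow> u < a" by auto
      then have "f (s, t) = reflection_colour d t" "f (u, v) = reflection_colour d v"
        by (auto simp: f_def reflection_colour_0)
      moreover have "v = d - t" using strip by simp
      ultimately show ?thesis using reflection_colour_reflect[OF d, of t] by simp
    qed
  qed
  then have "separates (strip a d) f"
    unfolding separates_def by force
  moreover have "strip a d \<subseteq> bicyclic"
    using a by (auto simp: strip_def bicyclic_def)
  ultimately show ?thesis by (auto simp: avoidable_iff_separates)
qed

locale separated_at_level =
  fixes U :: "(int \<times> int) set" and f :: "int \<times> int \<Rightarrow> bool" and a :: int
  assumes separates: "separates U f"
    and level_in: "(a, 0) \<in> U" and a_pos: "a \<ge> 1"
begin

lemma separatesD: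
  "x \<in> bicyclic \<Longrightarrow> y \<in> bicyclic \<Longrightarrow> x \<noteq> y \<Longrightarrow> bmult x y \<in> U \<Longrightarrow> f x \<noteq> f y"
  using separates unfolding separates_def by blast

definition level_colour :: "int \<Rightarrow> bool" where
  "level_colour t = f (max 0 (- t), t)"

lemma colour_below_level:
  assumes b: "(s, t) \<in> bicyclic"
    and pos: "t > 0 \<Longrightarrow> s \<le> a" and neg: "t < 0 \<Longrightarrow> s + t \<le> a" and zero: "t = 0 \<Longrightarrow> s < a"
  shows "f (s, t) = level_colour t"
proof -
  have "s \<ge> 0" "s + t \<ge> 0" using b by (auto simp: bicyclic_def)
  text \<open>In each case one partner z multiplies both (s,t) and (max 0 (-t), t) into (a,0).\<close>
  consider "t > 0" | "t < 0" | "t = 0" by linarith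
  then show ?thesis
  proof cases
    case 1
    have "(a + t, - t) \<in> bicyclic" "(0, t) \<in> bicyclic" using a_pos 1 by (auto simp: bicyclic_def)
    moreover have "bmult (a + t, - t) (s, t) = (a, 0)" "bmult (a + t, - t) (0, t) = (a, 0)"
      using pos[OF 1] a_pos by (simp_all add: max_def)
    ultimately have "f (a + t, - t) \<noteq> f (s, t)" "f (a + t, - t) \<noteq> f (0, t)"
      using separatesD[of "(a + t, - t)" "(s, t)"] separatesD[of "(a + t, - t)" "(0, t)"]
        b 1 level_in by auto
    with 1 show ?thesis by (auto simp: level_colour_def)
  next
    case 2
    have "(a, - t) \<in> bicyclic" "(- t, t) \<in> bicyclic" using a_pos 2 by (auto simp: bicyclic_def)
    moreover have "bmult (s, t) (a, - t) = (a, 0)" "bmult (- t, t) (a, - t) = (a, 0)"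
      using neg[OF 2] a_pos by (simp_all add: max_def)
    ultimately have "f (s, t) \<noteq> f (a, - t)" "f (- t, t) \<noteq> f (a, - t)"
      using separatesD[of "(s, t)" "(a, - t)"] separatesD[of "(- t, t)" "(a, - t)"]
        b 2 level_in by auto
    with 2 show ?thesis by (auto simp: level_colour_def)
  next
    case 3
    have "(a, 0) \<in> bicyclic" "(0, 0) \<in> bicyclic" using a_pos by (auto simp: bicyclic_def)
    moreover have "bmult (s, 0) (a, 0) = (a, 0)" "bmult (0, 0) (a, 0) = (a, 0)"
      using zero[OF 3] \<open>s \<ge> 0\<close> a_pos by (simp_all add: max_def)
    ultimately have "f (s, 0) \<noteq> f (a, 0)" "f (0, 0) \<noteq> f (a, 0)"
      using separatesD[of "(s, 0)" "(a, 0)"] separatesD[of "(0, 0)" "(a, 0)"]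
        b 3 zero[OF 3] a_pos level_in by auto
    with 3 show ?thesis by (auto simp: level_colour_def)
  qed
qed

lemma level_colour_0: "level_colour 0 \<noteq> f (a, 0)"
  using separatesD[of "(0, 0)" "(a, 0)"] level_in a_pos
  by (auto simp: bicyclic_def level_colour_def)

lemma level_colour_uminus:
  assumes "t \<noteq> 0"
  shows "level_colour t \<noteq> level_colour (- t)"
proof -
  have "level_colour t \<noteq> level_colour (- t)" if "t > 0" for t
  proof -
    have z: "(a + t, - t) \<in> bicyclic" "(0, t) \<in> bicyclic"
      using a_pos that by (auto simp: bicyclic_def)
    then have "f (a + t, - t) = level_colour (- t)"
      using colour_below_level[of "a + t" "- t"] that by auto
    moreover have "bmult (a + t, - t) (0, t) = (a, 0)" using a_pos by (simp add: max_def)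
    ultimately show ?thesis
      using separatesD[OF z] that level_in by (auto simp: level_colour_def)
  qed
  from this[of t] this[of "- t"] assms show ?thesis by (cases "t > 0") auto
qed

lemma level_colour_reflect:
  assumes u: "(c, d) \<in> U" "(c, d) \<in> bicyclic" "c < a" "c + d < a" and "d \<noteq> 0"
  shows "level_colour t \<noteq> level_colour (d - t)"
proof -
  have factor: "level_colour t \<noteq> level_colour (d - t)" if t: "t \<le> c + d" for t
  proof -
    have b: "(c + d - t, t) \<in> bicyclic" "(c, d - t) \<in> bicyclic"
      using u t by (auto simp: bicyclic_def)
    have "f (c + d - t, t) = level_colour t"
      by (rule colour_below_level) (use b(1) u in auto)
    moreover have "f (c, d - t) = level_colour (d - t)"
      by (rule colour_below_level) (use b(2) u t in auto)
    moreover have "(c + d - t, t) \<noteq> (c, d - t)" using \<open>d \<noteq> 0\<close> by auto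
    moreover have "bmult (c + d - t, t) (c, d - t) = (c, d)" by simp
    ultimately show ?thesis
      using separatesD[OF b] u(1) by auto
  qed
  show ?thesis
  proof (cases "t \<le> c + d")
    case True
    then show ?thesis by (rule factor)
  next
    case False
    then have "d - t \<le> c + d" using u(2) by (simp add: bicyclic_def)
    then show ?thesis using factor[of "d - t"] by simp
  qed
qed

lemma other_elements_below_level_odd:
  assumes u: "(c, d) \<in> U" and b: "(c, d) \<in> bicyclic" and "(c, d) \<noteq> (a, 0)" "(c, d) \<noteq> (0, 0)"
  shows "c < a \<and> c + d < a \<and> odd d"
proof -
  have ab: "(a, 0) \<in> bicyclic" "(0, 0) \<in> bicyclic" using a_pos by (auto simp: bicyclic_def)
  have "bmult (0, 0) (c, d) = (c, d)" using b by (simp add: bicyclic_def max_def)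
  then have f0: "f (0, 0) \<noteq> f (c, d)" using separatesD[OF ab(2) b] u assms by auto
  moreover have "f (0, 0) \<noteq> f (a, 0)" using level_colour_0 by (simp add: level_colour_def)
  ultimately have fc: "f (c, d) = f (a, 0)" by auto
  have "c < a"
  proof (rule ccontr)
    assume "\<not> c < a"
    then have "bmult (c, d) (a, 0) = (c, d)" by (simp add: max_def)
    then show False using separatesD[OF b ab(1)] u assms fc by auto
  qed
  moreover have "c + d < a"
  proof (rule ccontr)
    assume "\<not> c + d < a"
    then have "bmult (a, 0) (c, d) = (c, d)" by (simp add: max_def)
    then show False using separatesD[OF ab(1) b] u assms fc by auto
  qed
  moreover have "odd d"
  proof
    assume "even d"
    then obtain k where k: "d = 2 * k" by (auto elim: evenE)
    show False
    proof (cases "d = 0")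
      case True
      then have "f (c, d) = level_colour 0" using colour_below_level[OF b] \<open>c < a\<close> by auto
      then show False using f0 True by (simp add: level_colour_def)
    next
      case False
      then show False
        using level_colour_reflect[OF u b \<open>c < a\<close> \<open>c + d < a\<close> False, of k] k by simp
    qed
  qed
  ultimately show ?thesis by blast
qed

lemma odd_elements_below_level_same_snd:
  assumes u1: "(c1, d1) \<in> U" "(c1, d1) \<in> bicyclic" "c1 < a" "c1 + d1 < a" "odd d1"
    and u2: "(c2, d2) \<in> U" "(c2, d2) \<in> bicyclic" "c2 < a" "c2 + d2 < a" "odd d2"
  shows "d1 = d2"
proof (rule ccontr)
  assume "d1 \<noteq> d2"
  have "even (d2 - d1)" using u1(5) u2(5) by simp
  then obtain m where m: "d2 - d1 = 2 * m" by (rule evenE)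
  text \<open>The odd cycle -m, d1 + m, m of reflections.\<close>
  have "m \<noteq> 0" using m \<open>d1 \<noteq> d2\<close> by auto
  moreover have "d1 \<noteq> 0" "d2 \<noteq> 0" using u1(5) u2(5) by auto
  moreover have "d1 - (- m) = d1 + m" "d2 - (d1 + m) = m" using m by simp_all
  ultimately show False
    using level_colour_reflect[OF u1(1-4), of "- m"] level_colour_reflect[OF u2(1-4), of "d1 + m"]
      level_colour_uminus[of m] by metis
qed

lemma subset_strip:
  assumes "U \<subseteq> bicyclic"
  shows "\<exists>d. odd d \<and> d < a \<and> U \<subseteq> strip a d"
proof (cases "U \<subseteq> {(a, 0), (0, 0)}")
  case True
  then show ?thesis using a_pos by (intro exI[of _ "- 1"]) (auto simp: strip_def)
next
  case False
  then obtain c0 d where u0: "(c0, d) \<in> U" "(c0, d) \<noteq> (a, 0)" "(c0, d) \<noteq> (0, 0)" by auto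
  have small: "c < a \<and> c + e < a \<and> odd e \<and> (c, e) \<in> bicyclic"
    if "(c, e) \<in> U" "(c, e) \<noteq> (a, 0)" "(c, e) \<noteq> (0, 0)" for c e
    using other_elements_below_level_odd[OF that(1) _ that(2,3)] that(1) assms by auto
  have "U \<subseteq> strip a d"
  proof
    fix w assume "w \<in> U"
    obtain c e where w: "w = (c, e)" by fastforce
    show "w \<in> strip a d"
    proof (cases "w = (a, 0) \<or> w = (0, 0)")
      case False
      then have "c < a \<and> c + e < a \<and> odd e \<and> (c, e) \<in> bicyclic"
        using small \<open>w \<in> U\<close> w by auto
      moreover have "e = d"
        using odd_elements_below_level_same_snd[of c e c0 d] small[OF u0] u0(1) \<open>w \<in> U\<close> w calculation
        by simp
      ultimately show ?thesis using w by (auto simp: strip_def)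
    qed (auto simp: strip_def)
  qed
  moreover have "odd d \<and> d < a" using small[OF u0] by (auto simp: bicyclic_def)
  ultimately show ?thesis by blast
qed

end

theorem proposition5p5:
  fixes U :: "(int \<times> int) set" and a :: int
  assumes "maximal_avoidable U" and "(a, 0) \<in> U" and "a \<ge> 1"
  shows "\<exists>d::int. odd d \<and> d < a \<and>
           U = {(a, 0), (0, 0)} \<union> {(c, e). (c, e) \<in> bicyclic \<and> max c (c + e) < a \<and> e = d}"
proof -
  have "avoidable U" and maximal: "\<And>V. avoidable V \<Longrightarrow> U \<subseteq> V \<Longrightarrow> V = U"
    using assms(1) unfolding maximal_avoidable_def by blast+
  then obtain f where U_sub: "U \<subseteq> bicyclic" and "separates U f"
    unfolding avoidable_iff_separates by blast
  then interpret separated_at_level U f a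
    using assms by unfold_locales
  obtain d where "odd d" "d < a" "U \<subseteq> strip a d"
    using subset_strip[OF U_sub] by blast
  moreover have "strip a d = U"
    using maximal strip_avoidable[OF \<open>odd d\<close> assms(3)] \<open>U \<subseteq> strip a d\<close> by blast
  ultimately show ?thesis unfolding strip_def by blast
qed

end
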